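(* Let $(W_t)$ be a one-dimensional Brownian motion, $0<h_{\min}\le h_{\max}<\infty$ and $t_0>0$. Let $c>0$ and $\nu\in\mathcal{M}_1((-1,1))$ be such that, with $t':=\frac{t_0}{h_{\max}^2}\wedge t_0$, $$\mathbb{P}_{0,x}[W_{t'}\in\cdot\mid\tau_1>t']\ge c\,\nu\quad\text{for all }x\in(-1,1).$$ Then for every $z\in[h_{\min},h_{\max}]$, $$\mathbb{P}_{0,x}[W_u\in\cdot\mid\tau_z>u]\ge c\,\nu_z\quad\text{for all }x\in(-z,z),\ u\ge t_0,$$ where $\nu_z$ is the probability measure defined by $\nu_z(f)=\int_{(-1,1)}f(zx)\,\nu(dx)$.
   Context: $\mathbb{P}_{0,x}$ is the law of Brownian motion started at $x$; for $z>0$, $\tau_z:=\inf\{t\ge0:|W_t|=z\}$. Measure inequalities $\mu\ge c\nu$ are setwise. *)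

theory Defs
  imports "HOL-Probability.Probability"
begin

definition brownian_motion_from ::
  "'a measure \<Rightarrow> (real \<Rightarrow> 'a \<Rightarrow> real) \<Rightarrow> real \<Rightarrow> bool" where
  "brownian_motion_from M W x \<longleftrightarrow>
     prob_space M \<and>
     (\<forall>t\<ge>0. W t \<in> borel_measurable M) \<and>
     (\<forall>\<omega>\<in>space M. W 0 \<omega> = x) \<and>
     (\<forall>\<omega>\<in>space M. continuous_on {0..} (\<lambda>t. W t \<omega>)) \<and>
     (\<forall>s t. 0 \<le> s \<and> s < t \<longrightarrow>
        distributed M lborel (\<lambda>\<omega>. W t \<omega> - W s \<omega>) (\<lambda>y. ennreal (normal_density 0 (sqrt (t - s)) y))) \<and>
     (\<forall>(ts :: nat \<Rightarrow> real) n. 0 \<le> ts 0 \<and> (\<forall>i<n. ts i < ts (Suc i)) \<longrightarrow>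
        prob_space.indep_vars M (\<lambda>_. borel) (\<lambda>i \<omega>. W (ts (Suc i)) \<omega> - W (ts i) \<omega>) {..<n})"

definition exit_time :: "real \<Rightarrow> (real \<Rightarrow> 'a \<Rightarrow> real) \<Rightarrow> 'a \<Rightarrow> ereal" where
  "exit_time z W \<omega> = Inf (ereal ` {t. 0 \<le> t \<and> \<bar>W t \<omega>\<bar> = z})"

definition cond_law :: "'a measure \<Rightarrow> (real \<Rightarrow> 'a \<Rightarrow> real) \<Rightarrow> real \<Rightarrow> real \<Rightarrow> real set \<Rightarrow> real" where
  "cond_law M W z u A =
     measure M {\<omega>\<in>space M. W u \<omega> \<in> A \<and> exit_time z W \<omega> > ereal u}
     / measure M {\<omega>\<in>space M. exit_time z W \<omega> > ereal u}"

end

theory Submission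
  imports Defs
begin

(* Put S = z^2 t' and split u = r + S.  The increments of W before and after time r are
   independent, so P[W_u \<in> A, tau_z > u] = E[1{tau_z > r} g_A(W_r)], where g_A(y) is the
   probability that y + (W_(r+s) - W_r) stays in (-z, z) for s \<in> [0, S] and ends in A.
   By Brownian scaling, (y + W_(r+z^2 s) - W_r) / z is a Brownian motion started at y/z in
   (-1, 1), so the hypothesis at time t' gives g_A(y) \<ge> c nu_z(A) g_UNIV(y) pointwise; integrating
   yields P[W_u \<in> A, tau_z > u] \<ge> c nu_z(A) P[tau_z > u].  Dividing needs P[tau_z > u] > 0,
   which comes from the hypothesis as well: a null conditioning event makes cond_law vanish,
   so P_y[tau_1 > t'] > 0, and the same decomposition extends survival from [0, r] to [0, r + S].
   Path events over an interval are read off dyadic grids, which makes them measurable and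
   expresses them through countably many increments. *)

lemma exit_time_gt_iff:
  assumes cont: "continuous_on {0..} (\<lambda>t. W t \<omega>)" and start: "\<bar>W 0 \<omega>\<bar> < z" and "0 \<le> u"
  shows "exit_time z W \<omega> > ereal u \<longleftrightarrow> (\<forall>t\<in>{0..u}. \<bar>W t \<omega>\<bar> < z)"
proof
  assume exit: "exit_time z W \<omega> > ereal u"
  show "\<forall>t\<in>{0..u}. \<bar>W t \<omega>\<bar> < z"
  proof (rule ccontr)
    assume "\<not> (\<forall>t\<in>{0..u}. \<bar>W t \<omega>\<bar> < z)"
    then obtain t where t: "0 \<le> t" "t \<le> u" "z \<le> \<bar>W t \<omega>\<bar>" by force
    have "continuous_on {0..t} (\<lambda>s. \<bar>W s \<omega>\<bar>)"
      by (intro continuous_intros continuous_on_subset[OF cont]) auto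
    from IVT'[of "\<lambda>s. \<bar>W s \<omega>\<bar>", OF _ t(3) t(1) this] start
    obtain s where s: "0 \<le> s" "s \<le> t" "\<bar>W s \<omega>\<bar> = z" by force
    then have "exit_time z W \<omega> \<le> ereal s"
      unfolding exit_time_def by (intro Inf_lower) auto
    with exit have "ereal u < ereal s" by (rule order.strict_trans2)
    with s t show False by simp
  qed
next
  assume inside: "\<forall>t\<in>{0..u}. \<bar>W t \<omega>\<bar> < z"
  then have "\<bar>W u \<omega>\<bar> < z" using \<open>0 \<le> u\<close> by auto
  with cont \<open>0 \<le> u\<close> obtain d where d: "0 < d"
    and near: "\<And>t. 0 \<le> t \<Longrightarrow> dist t u < d \<Longrightarrow> dist (W t \<omega>) (W u \<omega>) < z - \<bar>W u \<omega>\<bar>"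
    unfolding continuous_on_iff by (metis atLeast_iff diff_gt_0_iff_gt)
  have "ereal (u + d) \<le> exit_time z W \<omega>"
    unfolding exit_time_def
  proof (rule Inf_greatest)
    fix e assume "e \<in> ereal ` {t. 0 \<le> t \<and> \<bar>W t \<omega>\<bar> = z}"
    then obtain t where t: "e = ereal t" "0 \<le> t" "\<bar>W t \<omega>\<bar> = z" by auto
    have "u + d \<le> t"
    proof (rule ccontr)
      assume "\<not> u + d \<le> t"
      then have "dist t u < d" if "u < t" using that by (simp add: dist_real_def)
      then show False
        using inside near[OF t(2)] t by (cases "t \<le> u") (auto simp: dist_real_def)
    qed
    then show "ereal (u + d) \<le> e" using t(1) by simp
  qed
  moreover have "ereal u < ereal (u + d)" using d by simp
  ultimately show "exit_time z W \<omega> > ereal u" by (rule order.strict_trans2[rotated])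
qed

(* Clamped at L, so that every k gives a point of [0, L]. *)
definition dyadic_point :: "real \<Rightarrow> nat \<Rightarrow> nat \<Rightarrow> real" where
  "dyadic_point L N k = L * real (min k (2 ^ N)) / 2 ^ N"

lemma dyadic_point_in_interval: "0 \<le> L \<Longrightarrow> dyadic_point L N k \<in> {0..L}"
proof -
  assume "0 \<le> L"
  then have "L * real (min k (2 ^ N)) \<le> L * 2 ^ N" by (intro mult_left_mono) simp_all
  with \<open>0 \<le> L\<close> show ?thesis by (simp add: dyadic_point_def field_simps)
qed

lemma dyadic_point_0 [simp]: "dyadic_point L N 0 = 0"
  and dyadic_point_end [simp]: "dyadic_point L 0 (Suc 0) = L"
  by (simp_all add: dyadic_point_def)

lemma dyadic_point_Suc: "dyadic_point L (Suc N) (2 * k) = dyadic_point L N k"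
  by (simp add: dyadic_point_def min_def)

lemma dyadic_point_tendsto:
  assumes t: "t \<in> {0..L}"
  shows "(\<lambda>N. dyadic_point L N (nat \<lfloor>t / L * 2 ^ N\<rfloor>)) \<longlonglongrightarrow> t"
proof (cases "L = 0")
  case True
  with t show ?thesis by (simp add: dyadic_point_def)
next
  case False
  with t have L: "0 < L" by auto
  define k where "k N = \<lfloor>t / L * 2 ^ N\<rfloor>" for N
  have k_le: "k N \<le> 2 ^ N" for N
  proof -
    have "t / L * 2 ^ N \<le> 2 ^ N" using t L by (simp add: field_simps)
    then show ?thesis unfolding k_def by (metis floor_mono floor_of_nat of_nat_numeral of_nat_power)
  qed
  have k_nonneg: "0 \<le> k N" for N using t L by (simp add: k_def)
  have eq: "dyadic_point L N (nat (k N)) = L * k N / 2 ^ N" for N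
    using k_le[of N] k_nonneg[of N] by (simp add: dyadic_point_def min_absorb1 nat_le_iff)
  have upper: "L * k N / 2 ^ N \<le> t" for N
  proof -
    have "L * k N \<le> L * (t / L * 2 ^ N)"
      using L by (intro mult_left_mono) (auto simp: k_def)
    with L show ?thesis by (simp add: field_simps)
  qed
  have lower: "t - L / 2 ^ N \<le> L * k N / 2 ^ N" for N
  proof -
    have "t / L * 2 ^ N - 1 \<le> k N"
      using real_of_int_floor_gt_diff_one[of "t / L * 2 ^ N"] by (simp add: k_def)
    then have "(t / L * 2 ^ N - 1) * (L / 2 ^ N) \<le> k N * (L / 2 ^ N)"
      using L by (intro mult_right_mono) simp_all
    moreover have "(t / L * 2 ^ N - 1) * (L / 2 ^ N) = t - L / 2 ^ N"
      using L by (simp add: field_simps)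
    ultimately show ?thesis by (simp add: mult.commute)
  qed
  have "(\<lambda>N. t - L / 2 ^ N) \<longlonglongrightarrow> t - 0"
    by (intro tendsto_intros LIMSEQ_divide_realpow_zero) simp
  then have lim: "(\<lambda>N. t - L / 2 ^ N) \<longlonglongrightarrow> t" by simp
  have "(\<lambda>N. L * k N / 2 ^ N) \<longlonglongrightarrow> t"
    by (rule tendsto_sandwich[OF always_eventually always_eventually lim tendsto_const])
      (use lower upper in auto)
  then show ?thesis unfolding k_def[symmetric] eq .
qed

(* sup |f| < z, stated with a countable quantifier so that it defines measurable events. *)
definition uniformly_inside :: "real \<Rightarrow> ('i \<Rightarrow> real) \<Rightarrow> bool" where
  "uniformly_inside z f \<longleftrightarrow> (\<exists>m::nat. \<forall>i. \<bar>f i\<bar> \<le> z - 1 / (real m + 1))"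

lemma continuous_on_abs_less_iff_dyadic:
  fixes w :: "real \<Rightarrow> real"
  assumes cont: "continuous_on {0..L} w" and L: "0 \<le> L"
  shows "(\<forall>t\<in>{0..L}. \<bar>w t\<bar> < z) \<longleftrightarrow> uniformly_inside z (\<lambda>(N, k). w (dyadic_point L N k))"
proof
  assume inside: "\<forall>t\<in>{0..L}. \<bar>w t\<bar> < z"
  have "continuous_on {0..L} (\<lambda>t. \<bar>w t\<bar>)" by (intro continuous_intros cont)
  from continuous_attains_sup[OF compact_Icc _ this] L
  obtain t0 where t0: "t0 \<in> {0..L}" "\<And>t. t \<in> {0..L} \<Longrightarrow> \<bar>w t\<bar> \<le> \<bar>w t0\<bar>" by auto
  have "0 < z - \<bar>w t0\<bar>" using inside t0(1) by simp
  then obtain m :: nat where "inverse (real (Suc m)) < z - \<bar>w t0\<bar>"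
    using reals_Archimedean by blast
  then have m: "1 / (real m + 1) < z - \<bar>w t0\<bar>" by (simp add: inverse_eq_divide add.commute)
  show "uniformly_inside z (\<lambda>(N, k). w (dyadic_point L N k))"
    unfolding uniformly_inside_def
  proof (intro exI[of _ m] allI)
    fix i :: "nat \<times> nat"
    obtain N k where i: "i = (N, k)" by (cases i)
    have "\<bar>w (dyadic_point L N k)\<bar> \<le> \<bar>w t0\<bar>"
      using t0(2) dyadic_point_in_interval[OF L] by blast
    with m show "\<bar>case i of (N, k) \<Rightarrow> w (dyadic_point L N k)\<bar> \<le> z - 1 / (real m + 1)"
      unfolding i by simp
  qed
next
  assume "uniformly_inside z (\<lambda>(N, k). w (dyadic_point L N k))"
  then obtain m :: nat where m: "\<And>N k. \<bar>w (dyadic_point L N k)\<bar> \<le> z - 1 / (real m + 1)"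
    unfolding uniformly_inside_def by fastforce
  show "\<forall>t\<in>{0..L}. \<bar>w t\<bar> < z"
  proof
    fix t assume t: "t \<in> {0..L}"
    have "(\<lambda>N. w (dyadic_point L N (nat \<lfloor>t / L * 2 ^ N\<rfloor>))) \<longlonglongrightarrow> w t"
      using dyadic_point_tendsto[OF t] dyadic_point_in_interval[OF L] t
      by (intro continuous_on_tendsto_compose[OF cont]) auto
    then have "\<bar>w t\<bar> \<le> z - 1 / (real m + 1)"
      by (rule tendsto_upperbound[OF tendsto_rabs]) (auto intro!: always_eventually m)
    moreover have "0 < 1 / (real m + 1)" by simp
    ultimately show "\<bar>w t\<bar> < z" by linarith
  qed
qed

lemma ball_atLeastAtMost_add_split:
  fixes r S :: real
  assumes "0 \<le> r" "0 \<le> S"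
  shows "(\<forall>t\<in>{0..r + S}. P t) \<longleftrightarrow> (\<forall>t\<in>{0..r}. P t) \<and> (\<forall>t\<in>{0..S}. P (r + t))"
proof safe
  fix t assume "\<forall>t\<in>{0..r}. P t" "\<forall>t\<in>{0..S}. P (r + t)" "t \<in> {0..r + S}"
  then show "P t" by (cases "t \<le> r") (auto dest: bspec[of _ _ "t - r"])
qed (use assms in auto)

lemma ball_atLeastAtMost_scale:
  fixes a t :: real
  assumes "0 < a"
  shows "(\<forall>\<tau>\<in>{0..t}. P (a * \<tau>)) \<longleftrightarrow> (\<forall>s\<in>{0..a * t}. P s)"
proof safe
  fix s assume "\<forall>\<tau>\<in>{0..t}. P (a * \<tau>)" "s \<in> {0..a * t}"
  moreover have "s / a \<in> {0..t}"
    using \<open>s \<in> {0..a * t}\<close> assms by (auto simp: field_simps)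
  ultimately have "P (a * (s / a))" by blast
  then show "P s" using assms by simp
qed (use assms in \<open>auto simp: mult_left_mono\<close>)

abbreviation borel_family :: "('i \<Rightarrow> real) measure" where
  "borel_family \<equiv> PiM UNIV (\<lambda>_. borel)"

context prob_space
begin

lemma emeasure_indep_var_Pair:
  assumes indep: "indep_var S X T Y" and H: "H \<in> sets (S \<Otimes>\<^sub>M T)"
  shows "emeasure M {\<omega>\<in>space M. (X \<omega>, Y \<omega>) \<in> H} =
    (\<integral>\<^sup>+\<omega>. emeasure M {\<omega>'\<in>space M. (X \<omega>, Y \<omega>') \<in> H} \<partial>M)"
    and "(\<lambda>\<omega>. emeasure M {\<omega>'\<in>space M. (X \<omega>, Y \<omega>') \<in> H}) \<in> borel_measurable M"
proof -
  from indep have X: "X \<in> measurable M S" and Y: "Y \<in> measurable M T"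
    and distr_eq: "distr M S X \<Otimes>\<^sub>M distr M T Y = distr M (S \<Otimes>\<^sub>M T) (\<lambda>\<omega>. (X \<omega>, Y \<omega>))"
    unfolding indep_var_distribution_eq by auto
  interpret Y: prob_space "distr M T Y" by (rule prob_space_distr[OF Y])
  have H': "H \<in> sets (distr M S X \<Otimes>\<^sub>M distr M T Y)"
    using H by (simp add: sets_pair_measure_cong[OF sets_distr sets_distr] del: sets_distr)
  have emeasure_section: "emeasure (distr M T Y) (Pair x -` H) = emeasure M {\<omega>'\<in>space M. (x, Y \<omega>') \<in> H}" for x
    using sets_Pair1[OF H] by (subst emeasure_distr[OF Y]) (auto intro!: arg_cong[where f="emeasure M"])
  have "emeasure M {\<omega>\<in>space M. (X \<omega>, Y \<omega>) \<in> H} = emeasure (distr M (S \<Otimes>\<^sub>M T) (\<lambda>\<omega>. (X \<omega>, Y \<omega>))) H"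
    using measurable_Pair[OF X Y] H by (subst emeasure_distr) (auto intro!: arg_cong[where f="emeasure M"])
  also have "\<dots> = (\<integral>\<^sup>+x. emeasure (distr M T Y) (Pair x -` H) \<partial>distr M S X)"
    unfolding distr_eq[symmetric] by (rule Y.emeasure_pair_measure_alt[OF H'])
  also have "\<dots> = (\<integral>\<^sup>+\<omega>. emeasure (distr M T Y) (Pair (X \<omega>) -` H) \<partial>M)"
    by (rule nn_integral_distr[OF X Y.measurable_emeasure_Pair[OF H']])
  finally show "emeasure M {\<omega>\<in>space M. (X \<omega>, Y \<omega>) \<in> H} =
      (\<integral>\<^sup>+\<omega>. emeasure M {\<omega>'\<in>space M. (X \<omega>, Y \<omega>') \<in> H} \<partial>M)"
    unfolding emeasure_section .
  have "H \<in> sets (S \<Otimes>\<^sub>M distr M T Y)"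
    using H by (simp add: sets_pair_measure_cong[OF refl sets_distr] del: sets_distr)
  from measurable_compose[OF X Y.measurable_emeasure_Pair[OF this]]
  have "(\<lambda>\<omega>. emeasure (distr M T Y) (Pair (X \<omega>) -` H)) \<in> borel_measurable M" .
  then show "(\<lambda>\<omega>. emeasure M {\<omega>'\<in>space M. (X \<omega>, Y \<omega>') \<in> H}) \<in> borel_measurable M"
    unfolding emeasure_section .
qed

lemma indep_var_if_measurable_sigma:
  assumes indep: "indep_set (sigma_sets (space M) G1) (sigma_sets (space M) G2)"
    and G: "G1 \<subseteq> Pow (space M)" "G2 \<subseteq> Pow (space M)"
    and X: "X \<in> measurable (sigma (space M) G1) S" "X \<in> measurable M S"
    and Y: "Y \<in> measurable (sigma (space M) G2) T" "Y \<in> measurable M T"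
  shows "indep_var S X T Y"
  unfolding indep_var_eq
proof (intro conjI X(2) Y(2))
  have "sigma_sets (space M) {X -` A \<inter> space M | A. A \<in> sets S} \<subseteq> sigma_sets (space M) G1"
    using measurable_sets[OF X(1)] G(1)
    by (intro sigma_algebra.sigma_sets_subset[OF sigma_algebra_sigma_sets[OF G(1)]])
       (auto simp: sets_measure_of space_measure_of_conv)
  moreover have "sigma_sets (space M) {Y -` A \<inter> space M | A. A \<in> sets T} \<subseteq> sigma_sets (space M) G2"
    using measurable_sets[OF Y(1)] G(2)
    by (intro sigma_algebra.sigma_sets_subset[OF sigma_algebra_sigma_sets[OF G(2)]])
       (auto simp: sets_measure_of space_measure_of_conv)
  ultimately show "indep_set (sigma_sets (space M) {X -` A \<inter> space M |A. A \<in> sets S})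
     (sigma_sets (space M) {Y -` A \<inter> space M |A. A \<in> sets T})"
    using indep unfolding indep_set_def
    by (rule_tac indep_sets_mono_sets) (auto split: bool.split)
qed

definition level_events :: "('a \<Rightarrow> nat \<times> nat \<Rightarrow> real) \<Rightarrow> nat \<Rightarrow> 'a set set" where
  "level_events P N = {(\<lambda>\<omega> k. P \<omega> (N, k)) -` A \<inter> space M | A. A \<in> sets borel_family}"

lemma level_events_mono:
  assumes nested: "\<And>\<omega> N k. P \<omega> (N, k) = P \<omega> (Suc N, 2 * k)" and "N \<le> N'"
  shows "level_events P N \<subseteq> level_events P N'"
proof -
  have "level_events P N \<subseteq> level_events P (Suc N)" for N
  proof
    fix a assume "a \<in> level_events P N"
    then obtain A where A: "A \<in> sets borel_family" "a = (\<lambda>\<omega> k. P \<omega> (N, k)) -` A \<inter> space M"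
      by (auto simp: level_events_def)
    have "(\<lambda>v k. v (2 * k)) \<in> measurable (borel_family :: (nat \<Rightarrow> real) measure) borel_family"
      by (intro measurable_PiM_single' measurable_component_singleton) (auto simp: space_PiM)
    from measurable_sets[OF this A(1)]
    have "(\<lambda>v k. v (2 * k)) -` A \<inter> space borel_family \<in> sets borel_family" .
    moreover have "a = (\<lambda>\<omega> k. P \<omega> (Suc N, k)) -` ((\<lambda>v k. v (2 * k)) -` A \<inter> space borel_family) \<inter> space M"
      unfolding A(2) by (auto simp: space_PiM nested[symmetric])
    ultimately show "a \<in> level_events P (Suc N)" unfolding level_events_def by blast
  qed
  then show ?thesis using lift_Suc_mono_le[of "level_events P"] \<open>N \<le> N'\<close> by blast
qed

lemma Int_stable_level_events:
  assumes nested: "\<And>\<omega> N k. P \<omega> (N, k) = P \<omega> (Suc N, 2 * k)"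
  shows "Int_stable (\<Union>N. level_events P N)"
proof (rule Int_stableI)
  fix a b assume "a \<in> (\<Union>N. level_events P N)" "b \<in> (\<Union>N. level_events P N)"
  then obtain N1 N2 where "a \<in> level_events P N1" "b \<in> level_events P N2" by auto
  then have "a \<in> level_events P (max N1 N2)" "b \<in> level_events P (max N1 N2)"
    using level_events_mono[where P=P, OF nested] by (meson max.cobounded1 max.cobounded2 subsetD)+
  then obtain A B where "A \<in> sets borel_family" "B \<in> sets borel_family"
      "a = (\<lambda>\<omega> k. P \<omega> (max N1 N2, k)) -` A \<inter> space M"
      "b = (\<lambda>\<omega> k. P \<omega> (max N1 N2, k)) -` B \<inter> space M"
    unfolding level_events_def by blast
  then have "a \<inter> b = (\<lambda>\<omega> k. P \<omega> (max N1 N2, k)) -` (A \<inter> B) \<inter> space M" "A \<inter> B \<in> sets borel_family"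
    by auto
  then show "a \<inter> b \<in> (\<Union>N. level_events P N)" unfolding level_events_def by blast
qed

lemma measurable_sigma_level_events:
  assumes "\<And>N k. (\<lambda>\<omega>. P \<omega> (N, k)) \<in> borel_measurable M"
  shows "P \<in> measurable (sigma (space M) (\<Union>N. level_events P N)) borel_family"
proof (rule measurable_PiM_single')
  fix i :: "nat \<times> nat"
  obtain N k where i: "i = (N, k)" by (cases i)
  have "(\<lambda>\<omega> k. P \<omega> (N, k)) -` A \<inter> space M \<in> (\<Union>N. level_events P N)" if "A \<in> sets borel_family" for A
    using that unfolding level_events_def by blast
  then have "(\<lambda>\<omega> k. P \<omega> (N, k)) \<in> measurable (sigma (space M) (\<Union>N. level_events P N)) borel_family"
    by (intro measurableI) (auto simp: space_PiM level_events_def sets_measure_of_conv sigma_sets.Basic)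
  from measurable_compose[OF this measurable_component_singleton[of k UNIV]]
  show "(\<lambda>\<omega>. P \<omega> i) \<in> borel_measurable (sigma (space M) (\<Union>N. level_events P N))"
    unfolding i by simp
qed (auto simp: space_PiM)

lemma level_events_subset_events:
  assumes "\<And>N k. (\<lambda>\<omega>. P \<omega> (N, k)) \<in> borel_measurable M"
  shows "(\<Union>N. level_events P N) \<subseteq> events"
proof -
  have "(\<lambda>\<omega> k. P \<omega> (N, k)) \<in> measurable M borel_family" for N
    using assms by (intro measurable_PiM_single') auto
  then show ?thesis unfolding level_events_def by (auto intro: measurable_sets)
qed

lemma indep_var_nested_levels:
  fixes P Q :: "'a \<Rightarrow> nat \<times> nat \<Rightarrow> real"
  assumes P: "\<And>N k. (\<lambda>\<omega>. P \<omega> (N, k)) \<in> borel_measurable M"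
    and Q: "\<And>N k. (\<lambda>\<omega>. Q \<omega> (N, k)) \<in> borel_measurable M"
    and P_nested: "\<And>\<omega> N k. P \<omega> (N, k) = P \<omega> (Suc N, 2 * k)"
    and Q_nested: "\<And>\<omega> N k. Q \<omega> (N, k) = Q \<omega> (Suc N, 2 * k)"
    and levels: "\<And>N. indep_var borel_family (\<lambda>\<omega> k. P \<omega> (N, k)) borel_family (\<lambda>\<omega> k. Q \<omega> (N, k))"
  shows "indep_var borel_family P borel_family Q"
proof (rule indep_var_if_measurable_sigma)
  show "indep_set (sigma_sets (space M) (\<Union>N. level_events P N)) (sigma_sets (space M) (\<Union>N. level_events Q N))"
  proof (rule indep_set_sigma_sets[OF _ Int_stable_level_events[where P=P, OF P_nested] Int_stable_level_events[where P=Q, OF Q_nested]])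
    show "indep_set (\<Union>N. level_events P N) (\<Union>N. level_events Q N)"
    proof (rule indep_setI)
      show "(\<Union>N. level_events P N) \<subseteq> events" "(\<Union>N. level_events Q N) \<subseteq> events"
        using level_events_subset_events P Q by blast+
    next
      fix a b assume "a \<in> (\<Union>N. level_events P N)" "b \<in> (\<Union>N. level_events Q N)"
      then obtain N1 N2 where "a \<in> level_events P N1" "b \<in> level_events Q N2" by auto
      then have ab: "a \<in> level_events P (max N1 N2)" "b \<in> level_events Q (max N1 N2)"
        using level_events_mono[where P=P, OF P_nested] level_events_mono[where P=Q, OF Q_nested]
        by (meson max.cobounded1 max.cobounded2 subsetD)+
      from levels[of "max N1 N2"] show "prob (a \<inter> b) = prob a * prob b"
        unfolding indep_var_eq
        by (elim conjE indep_setD) (use ab in \<open>auto simp: level_events_def intro: sigma_sets.Basic\<close>)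
    qed
  qed
next
  show "(\<Union>N. level_events P N) \<subseteq> Pow (space M)" "(\<Union>N. level_events Q N) \<subseteq> Pow (space M)"
    by (auto simp: level_events_def)
  show "P \<in> measurable (sigma (space M) (\<Union>N. level_events P N)) borel_family"
    "Q \<in> measurable (sigma (space M) (\<Union>N. level_events Q N)) borel_family"
    using measurable_sigma_level_events P Q by blast+
  show "P \<in> measurable M borel_family" "Q \<in> measurable M borel_family"
    using P Q by (auto intro!: measurable_PiM_single' simp: space_PiM)
qed

end

definition cond_law_minorized :: "'a measure \<Rightarrow> real \<Rightarrow> real \<Rightarrow> real measure \<Rightarrow> bool" where
  "cond_law_minorized M t c \<nu> \<longleftrightarrow> (\<forall>V y. brownian_motion_from M V y \<and> y \<in> {-1<..<1} \<longrightarrow>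
     (\<forall>B\<in>sets borel. cond_law M V 1 t B \<ge> c * measure \<nu> B))"

lemma cond_law_minorized_survival:
  assumes minorized: "cond_law_minorized M t c \<nu>" and V: "brownian_motion_from M V y" "\<bar>y\<bar> < 1"
    and c: "0 < c" and \<nu>: "0 < measure \<nu> UNIV"
  shows "0 < measure M {\<omega>\<in>space M. exit_time 1 V \<omega> > ereal t}"
    and "B \<in> sets borel \<Longrightarrow> c * measure \<nu> B * measure M {\<omega>\<in>space M. exit_time 1 V \<omega> > ereal t}
      \<le> measure M {\<omega>\<in>space M. V t \<omega> \<in> B \<and> exit_time 1 V \<omega> > ereal t}"
proof -
  let ?D = "measure M {\<omega>\<in>space M. exit_time 1 V \<omega> > ereal t}"
  have bound: "c * measure \<nu> B \<le> cond_law M V 1 t B" if "B \<in> sets borel" for B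
    using minorized V that unfolding cond_law_minorized_def by (auto simp: abs_less_iff)
  \<comment> \<open>If ?D were 0, then ?D / ?D = 0 would contradict the bound for B = UNIV.\<close>
  from bound[of UNIV] have "c * measure \<nu> UNIV \<le> ?D / ?D" by (simp add: cond_law_def)
  moreover have "0 < c * measure \<nu> UNIV" using c \<nu> by simp
  ultimately have "?D \<noteq> 0" by auto
  then show D_pos: "0 < ?D" using measure_nonneg[of M] by (simp add: order_less_le)
  assume "B \<in> sets borel"
  with bound[of B] D_pos show "c * measure \<nu> B * ?D \<le> measure M {\<omega>\<in>space M. V t \<omega> \<in> B \<and> exit_time 1 V \<omega> > ereal t}"
    by (simp add: cond_law_def pos_le_divide_eq)
qed

locale brownian_motion =
  fixes M :: "'a measure" and W :: "real \<Rightarrow> 'a \<Rightarrow> real" and x0 :: real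
  assumes brownian_motion: "brownian_motion_from M W x0"
begin

sublocale prob_space M
  using brownian_motion unfolding brownian_motion_from_def by auto

lemma W_measurable: "0 \<le> t \<Longrightarrow> W t \<in> borel_measurable M"
  and W_0: "\<omega> \<in> space M \<Longrightarrow> W 0 \<omega> = x0"
  and W_continuous: "\<omega> \<in> space M \<Longrightarrow> continuous_on {0..} (\<lambda>t. W t \<omega>)"
  and W_increment: "0 \<le> s \<Longrightarrow> s < t \<Longrightarrow>
    distributed M lborel (\<lambda>\<omega>. W t \<omega> - W s \<omega>) (\<lambda>y. ennreal (normal_density 0 (sqrt (t - s)) y))"
  and W_indep_increments: "0 \<le> ts 0 \<Longrightarrow> (\<forall>i<n. ts i < ts (Suc i)) \<Longrightarrow>
    indep_vars (\<lambda>_. borel) (\<lambda>i \<omega>. W (ts (Suc i)) \<omega> - W (ts i) \<omega>) {..<n}"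
  using brownian_motion unfolding brownian_motion_from_def by auto

lemma exit_time_gt_iff_inside:
  assumes "\<omega> \<in> space M" "\<bar>x0\<bar> < z" "0 \<le> u"
  shows "exit_time z W \<omega> > ereal u \<longleftrightarrow> (\<forall>t\<in>{0..u}. \<bar>W t \<omega>\<bar> < z)"
  using assms by (intro exit_time_gt_iff W_continuous) (auto simp: W_0)

lemma brownian_motion_shift_scale:
  assumes r: "0 \<le> r" and a: "0 < a"
  shows "brownian_motion_from M (\<lambda>t \<omega>. (y + (W (r + a\<^sup>2 * t) \<omega> - W r \<omega>)) / a) (y / a)"
  unfolding brownian_motion_from_def
proof (intro conjI allI impI ballI)
  show "prob_space M" by unfold_locales
next
  fix t :: real assume "0 \<le> t"
  with r have [measurable]: "W (r + a\<^sup>2 * t) \<in> borel_measurable M" "W r \<in> borel_measurable M"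
    by (auto intro: W_measurable)
  show "(\<lambda>\<omega>. (y + (W (r + a\<^sup>2 * t) \<omega> - W r \<omega>)) / a) \<in> borel_measurable M" by measurable
next
  fix \<omega> assume \<omega>: "\<omega> \<in> space M"
  then show "(y + (W (r + a\<^sup>2 * 0) \<omega> - W r \<omega>)) / a = y / a" by simp
  have "continuous_on {0..} (\<lambda>t. W (r + a\<^sup>2 * t) \<omega>)"
    by (rule continuous_on_compose2[OF W_continuous[OF \<omega>]]) (auto intro!: continuous_intros simp: r)
  then show "continuous_on {0..} (\<lambda>t. (y + (W (r + a\<^sup>2 * t) \<omega> - W r \<omega>)) / a)"
    by (intro continuous_intros) (use a in auto)
next
  fix s t :: real assume st: "0 \<le> s \<and> s < t"
  then have lt: "r + a\<^sup>2 * s < r + a\<^sup>2 * t" and "0 \<le> r + a\<^sup>2 * s" using a r by auto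
  from normal_density_affine[OF W_increment[OF this(2) lt], of "1 / a" 0] a st
  have "distributed M lborel (\<lambda>\<omega>. 0 + 1 / a * (W (r + a\<^sup>2 * t) \<omega> - W (r + a\<^sup>2 * s) \<omega>))
      (\<lambda>x. ennreal (normal_density (0 + 1 / a * 0) (\<bar>1 / a\<bar> * sqrt (r + a\<^sup>2 * t - (r + a\<^sup>2 * s))) x))"
    by simp
  moreover have "\<bar>1 / a\<bar> * sqrt (r + a\<^sup>2 * t - (r + a\<^sup>2 * s)) = sqrt (t - s)"
    using a by (simp add: right_diff_distrib[symmetric] real_sqrt_mult)
  moreover have "(\<lambda>\<omega>. 0 + 1 / a * (W (r + a\<^sup>2 * t) \<omega> - W (r + a\<^sup>2 * s) \<omega>)) =
     (\<lambda>\<omega>. (y + (W (r + a\<^sup>2 * t) \<omega> - W r \<omega>)) / a - (y + (W (r + a\<^sup>2 * s) \<omega> - W r \<omega>)) / a)"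
    using a by (auto simp: field_simps)
  ultimately show "distributed M lborel
      (\<lambda>\<omega>. (y + (W (r + a\<^sup>2 * t) \<omega> - W r \<omega>)) / a - (y + (W (r + a\<^sup>2 * s) \<omega> - W r \<omega>)) / a)
      (\<lambda>x. ennreal (normal_density 0 (sqrt (t - s)) x))"
    by simp
next
  fix ts :: "nat \<Rightarrow> real" and n :: nat
  assume ts: "0 \<le> ts 0 \<and> (\<forall>i<n. ts i < ts (Suc i))"
  with r a have "indep_vars (\<lambda>_. borel)
      (\<lambda>i \<omega>. W (r + a\<^sup>2 * ts (Suc i)) \<omega> - W (r + a\<^sup>2 * ts i) \<omega>) {..<n}"
    by (intro W_indep_increments) auto
  from indep_vars_compose2[OF this, where Y="\<lambda>_ v. v / a"]
  have "indep_vars (\<lambda>_. borel)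
      (\<lambda>i \<omega>. (W (r + a\<^sup>2 * ts (Suc i)) \<omega> - W (r + a\<^sup>2 * ts i) \<omega>) / a) {..<n}"
    by simp
  moreover have "(\<lambda>i \<omega>. (W (r + a\<^sup>2 * ts (Suc i)) \<omega> - W (r + a\<^sup>2 * ts i) \<omega>) / a) =
     (\<lambda>i \<omega>. (y + (W (r + a\<^sup>2 * ts (Suc i)) \<omega> - W r \<omega>)) / a - (y + (W (r + a\<^sup>2 * ts i) \<omega> - W r \<omega>)) / a)"
    using a by (auto simp: fun_eq_iff field_simps)
  ultimately show "indep_vars (\<lambda>_. borel) (\<lambda>i \<omega>. (y + (W (r + a\<^sup>2 * ts (Suc i)) \<omega> - W r \<omega>)) / a -
       (y + (W (r + a\<^sup>2 * ts i) \<omega> - W r \<omega>)) / a) {..<n}"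
    by simp
qed

definition inside_until :: "real \<Rightarrow> real \<Rightarrow> 'a set" where
  "inside_until z r = {\<omega>\<in>space M. \<forall>t\<in>{0..r}. \<bar>W t \<omega>\<bar> < z}"

lemma inside_until_iff_dyadic:
  assumes "\<omega> \<in> space M" "0 \<le> r"
  shows "\<omega> \<in> inside_until z r \<longleftrightarrow> uniformly_inside z (\<lambda>(N, k). W (dyadic_point r N k) \<omega>)"
  using assms continuous_on_subset[OF W_continuous[OF assms(1)], of "{0..r}"]
  by (simp add: inside_until_def continuous_on_abs_less_iff_dyadic)

lemma sets_inside_until:
  assumes "0 \<le> r"
  shows "inside_until z r \<in> sets M"
proof -
  have [measurable]: "W (dyadic_point r N k) \<in> borel_measurable M" for N k
    using dyadic_point_in_interval[OF assms] by (auto intro: W_measurable)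
  have "inside_until z r = {\<omega>\<in>space M. \<omega> \<in> inside_until z r}"
    by (auto simp: inside_until_def)
  also have "\<dots> = {\<omega>\<in>space M. \<exists>m::nat. \<forall>N k. \<bar>W (dyadic_point r N k) \<omega>\<bar> \<le> z - 1 / (real m + 1)}"
    using inside_until_iff_dyadic[OF _ assms] by (intro Collect_cong conj_cong refl) (simp add: uniformly_inside_def)
  also have "\<dots> \<in> sets M" by measurable
  finally show ?thesis .
qed

end

locale brownian_motion_split = brownian_motion +
  fixes r S :: real
  assumes r_nonneg: "0 \<le> r" and S_pos: "0 < S"
begin

definition Pre :: "'a \<Rightarrow> nat \<times> nat \<Rightarrow> real" where
  "Pre \<omega> = (\<lambda>(N, k). W (dyadic_point r N k) \<omega> - W 0 \<omega>)"

definition Post :: "'a \<Rightarrow> nat \<times> nat \<Rightarrow> real" where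
  "Post \<omega> = (\<lambda>(N, k). W (r + dyadic_point S N k) \<omega> - W r \<omega>)"

lemma Pre_component_measurable: "(\<lambda>\<omega>. Pre \<omega> i) \<in> borel_measurable M"
  and Post_component_measurable: "(\<lambda>\<omega>. Post \<omega> i) \<in> borel_measurable M"
proof -
  obtain N k where i: "i = (N, k)" by (cases i)
  have "0 \<le> dyadic_point r N k" "0 \<le> r + dyadic_point S N k"
    using dyadic_point_in_interval r_nonneg S_pos by (auto simp: less_imp_le)
  then show "(\<lambda>\<omega>. Pre \<omega> i) \<in> borel_measurable M" "(\<lambda>\<omega>. Post \<omega> i) \<in> borel_measurable M"
    unfolding i Pre_def Post_def using r_nonneg by (auto intro!: borel_measurable_diff W_measurable)
qed

definition grid_time :: "nat \<Rightarrow> nat \<Rightarrow> real" where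
  "grid_time N i = (if i \<le> 2 ^ N then r * real i / 2 ^ N else r + S * real (i - 2 ^ N) / 2 ^ N)"

lemma grid_time_0: "grid_time N 0 = 0"
  by (simp add: grid_time_def)

lemma grid_time_less_Suc:
  assumes "0 < r"
  shows "grid_time N i < grid_time N (Suc i)"
proof -
  consider "Suc i \<le> 2 ^ N" | "i = 2 ^ N" | "2 ^ N < i" by linarith
  then show ?thesis
  proof cases
    case 1
    with assms show ?thesis by (simp add: grid_time_def divide_strict_right_mono)
  next
    case 2
    with assms S_pos show ?thesis by (simp add: grid_time_def)
  next
    case 3
    then have "real (Suc i - 2 ^ N) = real (i - 2 ^ N) + 1" by (simp add: Suc_diff_le)
    with 3 S_pos show ?thesis by (simp add: grid_time_def field_simps)
  qed
qed

lemma grid_time_pre: "grid_time N (min k (2 ^ N)) = dyadic_point r N k"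
  by (simp add: grid_time_def dyadic_point_def)

lemma grid_time_post: "grid_time N (2 ^ N + min k (2 ^ N)) = r + dyadic_point S N k"
  by (cases "k = 0") (auto simp: grid_time_def dyadic_point_def)

lemma indep_var_Pre_Post_level:
  assumes "0 < r"
  shows "indep_var borel_family (\<lambda>\<omega> k. Pre \<omega> (N, k)) borel_family (\<lambda>\<omega> k. Post \<omega> (N, k))"
proof -
  define Inc where "Inc i \<omega> = W (grid_time N (Suc i)) \<omega> - W (grid_time N i) \<omega>" for i \<omega>
  define A where "A = {..<(2::nat) ^ N}"
  define B where "B = {(2::nat) ^ N..<2 ^ N + 2 ^ N}"
  have "indep_vars (\<lambda>_. borel) Inc {..<2 ^ N + 2 ^ N}"
    unfolding Inc_def by (rule W_indep_increments) (auto simp: grid_time_0 grid_time_less_Suc[OF assms])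
  then have indep: "indep_var (PiM A (\<lambda>_. borel)) (\<lambda>\<omega>. restrict (\<lambda>i. Inc i \<omega>) A)
      (PiM B (\<lambda>_. borel)) (\<lambda>\<omega>. restrict (\<lambda>i. Inc i \<omega>) B)"
    by (rule indep_var_restrict) (auto simp: A_def B_def)
  define sum_pre where "sum_pre v = (\<lambda>k. \<Sum>i<min k (2 ^ N). v i)" for v :: "nat \<Rightarrow> real"
  define sum_post where "sum_post v = (\<lambda>k. \<Sum>i\<in>{2 ^ N..<2 ^ N + min k (2 ^ N)}. v i)" for v :: "nat \<Rightarrow> real"
  have "sum_pre \<in> measurable (PiM A (\<lambda>_. borel)) borel_family"
    "sum_post \<in> measurable (PiM B (\<lambda>_. borel)) borel_family"
    unfolding sum_pre_def sum_post_def
    by (intro measurable_PiM_single' borel_measurable_sum measurable_component_singleton;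
        force simp: A_def B_def)+
  note indep_sums = indep_var_compose[OF indep this]
  have pre_eq: "(\<lambda>\<omega>. sum_pre (restrict (\<lambda>i. Inc i \<omega>) A)) = (\<lambda>\<omega> k. Pre \<omega> (N, k))"
  proof (intro ext)
    fix \<omega> k
    have "sum_pre (restrict (\<lambda>i. Inc i \<omega>) A) k = (\<Sum>i<min k (2 ^ N). Inc i \<omega>)"
      unfolding sum_pre_def by (intro sum.cong) (auto simp: A_def)
    also have "\<dots> = W (grid_time N (min k (2 ^ N))) \<omega> - W (grid_time N 0) \<omega>"
      unfolding Inc_def by (rule sum_lessThan_telescope)
    finally show "sum_pre (restrict (\<lambda>i. Inc i \<omega>) A) k = Pre \<omega> (N, k)"
      by (simp add: Pre_def grid_time_pre grid_time_0)
  qed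
  have post_eq: "(\<lambda>\<omega>. sum_post (restrict (\<lambda>i. Inc i \<omega>) B)) = (\<lambda>\<omega> k. Post \<omega> (N, k))"
  proof (intro ext)
    fix \<omega> k
    have "sum_post (restrict (\<lambda>i. Inc i \<omega>) B) k = (\<Sum>i\<in>{2 ^ N..<2 ^ N + min k (2 ^ N)}. Inc i \<omega>)"
      unfolding sum_post_def by (intro sum.cong) (auto simp: B_def)
    also have "\<dots> = W (grid_time N (2 ^ N + min k (2 ^ N))) \<omega> - W (grid_time N (2 ^ N)) \<omega>"
      unfolding Inc_def by (rule sum_Suc_diff') simp
    finally show "sum_post (restrict (\<lambda>i. Inc i \<omega>) B) k = Post \<omega> (N, k)"
      using grid_time_post[of N 0] by (simp add: Post_def grid_time_post)
  qed
  from indep_sums show ?thesis unfolding comp_def pre_eq post_eq .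
qed

lemma indep_var_Pre_Post:
  assumes "0 < r"
  shows "indep_var borel_family Pre borel_family Post"
  by (rule indep_var_nested_levels[OF Pre_component_measurable Post_component_measurable _ _
        indep_var_Pre_Post_level[OF assms]])
     (simp_all add: Pre_def Post_def dyadic_point_Suc)

definition survival_from :: "real \<Rightarrow> real set \<Rightarrow> real \<Rightarrow> ennreal" where
  "survival_from z A y = emeasure M {\<omega>\<in>space M. y + (W (r + S) \<omega> - W r \<omega>) \<in> A \<and>
     (\<forall>t\<in>{0..S}. \<bar>y + (W (r + t) \<omega> - W r \<omega>)\<bar> < z)}"

(* The event {W_(r+S) \<in> A, tau_z > r + S} in terms of the pre-r increments (first component)
   and the post-r increments (second component); index (0, Suc 0) is the endpoint of the grid. *)
definition survival_set :: "real \<Rightarrow> real set \<Rightarrow> ((nat \<times> nat \<Rightarrow> real) \<times> (nat \<times> nat \<Rightarrow> real)) set" where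
  "survival_set z A = {pq \<in> space (borel_family \<Otimes>\<^sub>M borel_family).
     uniformly_inside z (\<lambda>i. x0 + fst pq i) \<and> x0 + fst pq (0, Suc 0) + snd pq (0, Suc 0) \<in> A \<and>
     uniformly_inside z (\<lambda>i. x0 + fst pq (0, Suc 0) + snd pq i)}"

lemma in_survival_set: "(p, q) \<in> survival_set z A \<longleftrightarrow> uniformly_inside z (\<lambda>i. x0 + p i) \<and>
    x0 + p (0, Suc 0) + q (0, Suc 0) \<in> A \<and> uniformly_inside z (\<lambda>i. x0 + p (0, Suc 0) + q i)"
  by (simp add: survival_set_def space_pair_measure space_PiM)

lemma sets_survival_set:
  assumes [measurable]: "A \<in> sets borel"
  shows "survival_set z A \<in> sets (borel_family \<Otimes>\<^sub>M borel_family)"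
proof -
  have [measurable]: "(\<lambda>pq. fst pq i) \<in> borel_measurable (borel_family \<Otimes>\<^sub>M borel_family)"
    "(\<lambda>pq. snd pq i) \<in> borel_measurable (borel_family \<Otimes>\<^sub>M borel_family)" for i :: "nat \<times> nat"
    by (auto intro: measurable_compose[OF measurable_fst measurable_component_singleton]
      measurable_compose[OF measurable_snd measurable_component_singleton])
  show ?thesis unfolding survival_set_def uniformly_inside_def by measurable
qed

lemma Pre_end: "\<omega> \<in> space M \<Longrightarrow> x0 + Pre \<omega> (0, Suc 0) = W r \<omega>"
  and Post_end: "Post \<omega> (0, Suc 0) = W (r + S) \<omega> - W r \<omega>"
  by (simp_all add: Pre_def Post_def W_0)

lemma inside_until_iff_Pre:
  "\<omega> \<in> space M \<Longrightarrow> \<omega> \<in> inside_until z r \<longleftrightarrow> uniformly_inside z (\<lambda>i. x0 + Pre \<omega> i)"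
  using inside_until_iff_dyadic[OF _ r_nonneg]
  by (simp add: Pre_def W_0 case_prod_beta')

lemma inside_after_iff_Post:
  assumes "\<omega> \<in> space M"
  shows "(\<forall>t\<in>{0..S}. \<bar>y + (W (r + t) \<omega> - W r \<omega>)\<bar> < z) \<longleftrightarrow> uniformly_inside z (\<lambda>i. y + Post \<omega> i)"
proof -
  have "continuous_on {0..S} (\<lambda>t. W (r + t) \<omega>)"
    by (rule continuous_on_compose2[OF W_continuous[OF assms]]) (auto intro!: continuous_intros simp: r_nonneg)
  then have "continuous_on {0..S} (\<lambda>t. y + (W (r + t) \<omega> - W r \<omega>))"
    by (intro continuous_intros)
  from continuous_on_abs_less_iff_dyadic[OF this less_imp_le[OF S_pos]]
  show ?thesis by (simp add: Post_def case_prod_beta' add_diff_eq)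
qed

lemma survival_from_Post:
  "survival_from z A y = emeasure M {\<omega>\<in>space M. y + Post \<omega> (0, Suc 0) \<in> A \<and> uniformly_inside z (\<lambda>i. y + Post \<omega> i)}"
  unfolding survival_from_def Post_end
  by (intro arg_cong[where f="emeasure M"] Collect_cong conj_cong refl inside_after_iff_Post)

lemma survival_event_eq_Pre_Post:
  assumes "\<bar>x0\<bar> < z"
  shows "{\<omega>\<in>space M. W (r + S) \<omega> \<in> A \<and> exit_time z W \<omega> > ereal (r + S)} =
    {\<omega>\<in>space M. (Pre \<omega>, Post \<omega>) \<in> survival_set z A}"
proof (intro Collect_cong conj_cong refl)
  fix \<omega> assume \<omega>: "\<omega> \<in> space M"
  have "exit_time z W \<omega> > ereal (r + S) \<longleftrightarrow>
      (\<forall>t\<in>{0..r}. \<bar>W t \<omega>\<bar> < z) \<and> (\<forall>t\<in>{0..S}. \<bar>W r \<omega> + (W (r + t) \<omega> - W r \<omega>)\<bar> < z)"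
    using exit_time_gt_iff_inside[OF \<omega> assms] ball_atLeastAtMost_add_split[OF r_nonneg less_imp_le[OF S_pos]]
      r_nonneg S_pos by simp
  also have "\<dots> \<longleftrightarrow> uniformly_inside z (\<lambda>i. x0 + Pre \<omega> i) \<and> uniformly_inside z (\<lambda>i. x0 + Pre \<omega> (0, Suc 0) + Post \<omega> i)"
    using inside_until_iff_Pre[OF \<omega>] inside_after_iff_Post[OF \<omega>, of "W r \<omega>"] \<omega>
    by (simp add: inside_until_def Pre_end add.assoc)
  finally show "W (r + S) \<omega> \<in> A \<and> exit_time z W \<omega> > ereal (r + S) \<longleftrightarrow>
      (Pre \<omega>, Post \<omega>) \<in> survival_set z A"
    using \<omega> by (auto simp: in_survival_set Pre_end[OF \<omega>] Post_end)
qed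

lemma emeasure_survival_section:
  assumes \<omega>: "\<omega> \<in> space M"
  shows "emeasure M {\<omega>'\<in>space M. (Pre \<omega>, Post \<omega>') \<in> survival_set z A} =
    indicator (inside_until z r) \<omega> * survival_from z A (W r \<omega>)"
  using \<omega> by (cases "\<omega> \<in> inside_until z r")
    (simp_all add: in_survival_set survival_from_Post inside_until_iff_Pre Pre_end[OF \<omega>] add.assoc)

lemma emeasure_survival_eq_nn_integral:
  assumes "\<bar>x0\<bar> < z" and A: "A \<in> sets borel"
  shows "emeasure M {\<omega>\<in>space M. W (r + S) \<omega> \<in> A \<and> exit_time z W \<omega> > ereal (r + S)} =
      (\<integral>\<^sup>+\<omega>. indicator (inside_until z r) \<omega> * survival_from z A (W r \<omega>) \<partial>M)"
    and "(\<lambda>\<omega>. indicator (inside_until z r) \<omega> * survival_from z A (W r \<omega>)) \<in> borel_measurable M"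
proof -
  define f where "f \<omega> = indicator (inside_until z r) \<omega> * survival_from z A (W r \<omega>)" for \<omega>
  have "emeasure M {\<omega>\<in>space M. W (r + S) \<omega> \<in> A \<and> exit_time z W \<omega> > ereal (r + S)} =
      (\<integral>\<^sup>+\<omega>. f \<omega> \<partial>M) \<and> f \<in> borel_measurable M"
  proof (cases "r = 0")
    case False
    with r_nonneg have indep: "indep_var borel_family Pre borel_family Post"
      by (intro indep_var_Pre_Post) simp
    note freeze = emeasure_indep_var_Pair[OF indep sets_survival_set[OF A]]
    have section_eq: "emeasure M {\<omega>'\<in>space M. (Pre \<omega>, Post \<omega>') \<in> survival_set z A} = f \<omega>"
      if "\<omega> \<in> space M" for \<omega>
      unfolding f_def by (rule emeasure_survival_section[OF that])
    show ?thesis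
      unfolding survival_event_eq_Pre_Post[OF assms(1)] freeze(1)
      using nn_integral_cong[OF section_eq] measurable_cong[THEN iffD1, OF section_eq freeze(2)]
      by simp
  next
    case True
    \<comment> \<open>The grid times are then not strictly increasing, but there is nothing before time 0.\<close>
    have "inside_until z r = space M"
      using \<open>r = 0\<close> assms(1) by (auto simp: inside_until_def W_0)
    then have const: "survival_from z A x0 = f \<omega>" if "\<omega> \<in> space M" for \<omega>
      using that \<open>r = 0\<close> by (simp add: f_def W_0)
    have "{\<omega>\<in>space M. W (r + S) \<omega> \<in> A \<and> exit_time z W \<omega> > ereal (r + S)} =
      {\<omega>\<in>space M. x0 + (W (r + S) \<omega> - W r \<omega>) \<in> A \<and> (\<forall>t\<in>{0..S}. \<bar>x0 + (W (r + t) \<omega> - W r \<omega>)\<bar> < z)}"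
      using exit_time_gt_iff_inside[OF _ assms(1)] S_pos \<open>r = 0\<close> by (auto simp: W_0)
    then have "emeasure M {\<omega>\<in>space M. W (r + S) \<omega> \<in> A \<and> exit_time z W \<omega> > ereal (r + S)} =
        (\<integral>\<^sup>+\<omega>. survival_from z A x0 \<partial>M)"
      by (simp add: survival_from_def emeasure_space_1)
    moreover have "(\<integral>\<^sup>+\<omega>. survival_from z A x0 \<partial>M) = (\<integral>\<^sup>+\<omega>. f \<omega> \<partial>M)"
      by (rule nn_integral_cong) (rule const)
    moreover have "(\<lambda>_. survival_from z A x0) \<in> borel_measurable M \<longleftrightarrow> f \<in> borel_measurable M"
      by (rule measurable_cong) (rule const)
    then have "f \<in> borel_measurable M" by simp
    ultimately show ?thesis by simp
  qed
  then show "emeasure M {\<omega>\<in>space M. W (r + S) \<omega> \<in> A \<and> exit_time z W \<omega> > ereal (r + S)} =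
      (\<integral>\<^sup>+\<omega>. indicator (inside_until z r) \<omega> * survival_from z A (W r \<omega>) \<partial>M)"
    and "(\<lambda>\<omega>. indicator (inside_until z r) \<omega> * survival_from z A (W r \<omega>)) \<in> borel_measurable M"
    unfolding f_def[abs_def] by auto
qed


definition rescaled_restart :: "real \<Rightarrow> real \<Rightarrow> real \<Rightarrow> 'a \<Rightarrow> real" where
  "rescaled_restart z y \<tau> \<omega> = (y + (W (r + z\<^sup>2 * \<tau>) \<omega> - W r \<omega>)) / z"

lemma survival_from_rescaled_restart:
  assumes z: "0 < z" and S: "S = z\<^sup>2 * t" and y: "\<bar>y\<bar> < z"
  shows "survival_from z A y = emeasure M {\<omega>\<in>space M.
    rescaled_restart z y t \<omega> \<in> (\<lambda>v. z * v) -` A \<and> exit_time 1 (rescaled_restart z y) \<omega> > ereal t}"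
  unfolding survival_from_def
proof (intro arg_cong[where f="emeasure M"] Collect_cong conj_cong[OF refl])
  fix \<omega> assume \<omega>: "\<omega> \<in> space M"
  interpret V: brownian_motion M "rescaled_restart z y" "y / z"
    using brownian_motion_shift_scale[OF r_nonneg z]
    by unfold_locales (simp add: rescaled_restart_def[abs_def])
  have t: "0 \<le> t" using S S_pos z by (simp add: zero_less_mult_iff)
  have "exit_time 1 (rescaled_restart z y) \<omega> > ereal t \<longleftrightarrow>
      (\<forall>\<tau>\<in>{0..t}. \<bar>y + (W (r + z\<^sup>2 * \<tau>) \<omega> - W r \<omega>)\<bar> < z)"
    using V.exit_time_gt_iff_inside[OF \<omega> _ t] y z by (simp add: rescaled_restart_def abs_divide divide_less_eq)
  also have "\<dots> \<longleftrightarrow> (\<forall>s\<in>{0..S}. \<bar>y + (W (r + s) \<omega> - W r \<omega>)\<bar> < z)"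
    unfolding S using z by (intro ball_atLeastAtMost_scale) simp
  finally show "y + (W (r + S) \<omega> - W r \<omega>) \<in> A \<and> (\<forall>s\<in>{0..S}. \<bar>y + (W (r + s) \<omega> - W r \<omega>)\<bar> < z) \<longleftrightarrow>
      rescaled_restart z y t \<omega> \<in> (\<lambda>v. z * v) -` A \<and> exit_time 1 (rescaled_restart z y) \<omega> > ereal t"
    using z by (simp add: rescaled_restart_def S)
qed


lemma survival_from_minorized:
  assumes minorized: "cond_law_minorized M t c \<nu>" and c: "0 < c" and \<nu>: "0 < measure \<nu> UNIV"
    and z: "0 < z" and S: "S = z\<^sup>2 * t" and y: "\<bar>y\<bar> < z"
  shows "0 < survival_from z UNIV y"
    and "A \<in> sets borel \<Longrightarrow>
      ennreal (c * measure \<nu> ((\<lambda>v. z * v) -` A)) * survival_from z UNIV y \<le> survival_from z A y"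
proof -
  have V: "brownian_motion_from M (rescaled_restart z y) (y / z)"
    using brownian_motion_shift_scale[OF r_nonneg z] by (simp add: rescaled_restart_def[abs_def])
  have y': "\<bar>y / z\<bar> < 1" using y z by (simp add: abs_divide divide_less_eq)
  note survival = cond_law_minorized_survival[OF minorized V y' c \<nu>]
  have U: "survival_from z UNIV y = measure M {\<omega>\<in>space M. exit_time 1 (rescaled_restart z y) \<omega> > ereal t}"
    by (simp add: survival_from_rescaled_restart[OF z S y] emeasure_eq_measure)
  then show "0 < survival_from z UNIV y" using survival(1) by simp
  assume "A \<in> sets borel"
  then have "(\<lambda>v. z * v) -` A \<in> sets borel" using measurable_sets[of "\<lambda>v. z * v" borel borel A] by simp
  from survival(2)[OF this] c show "ennreal (c * measure \<nu> ((\<lambda>v. z * v) -` A)) * survival_from z UNIV y \<le> survival_from z A y"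
    unfolding U survival_from_rescaled_restart[OF z S y, of A]
    by (simp add: emeasure_eq_measure ennreal_mult'[symmetric] ennreal_leI)
qed

lemma inside_until_eq_survival_event:
  "\<bar>x0\<bar> < z \<Longrightarrow> inside_until z (r + S) = {\<omega>\<in>space M. W (r + S) \<omega> \<in> UNIV \<and> exit_time z W \<omega> > ereal (r + S)}"
  using exit_time_gt_iff_inside r_nonneg S_pos by (auto simp: inside_until_def)

lemma emeasure_inside_until_extend:
  assumes minorized: "cond_law_minorized M t c \<nu>" and c: "0 < c" and \<nu>: "0 < measure \<nu> UNIV"
    and z: "0 < z" and S: "S = z\<^sup>2 * t" and x0: "\<bar>x0\<bar> < z"
    and pos: "0 < emeasure M (inside_until z r)"
  shows "0 < emeasure M (inside_until z (r + S))"
proof -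
  define f where "f \<omega> = indicator (inside_until z r) \<omega> * survival_from z UNIV (W r \<omega>)" for \<omega>
  note markov = emeasure_survival_eq_nn_integral[OF x0 space_in_borel, folded f_def]
  have [measurable]: "f \<in> borel_measurable M"
    using markov(2) by (simp add: f_def[abs_def])
  have "inside_until z r \<subseteq> {\<omega>\<in>space M. f \<omega> \<noteq> 0}"
  proof
    fix \<omega> assume \<omega>: "\<omega> \<in> inside_until z r"
    then have "\<bar>W r \<omega>\<bar> < z" using r_nonneg by (auto simp: inside_until_def)
    from survival_from_minorized(1)[OF minorized c \<nu> z S this] \<omega> show "\<omega> \<in> {\<omega>\<in>space M. f \<omega> \<noteq> 0}"
      by (auto simp: f_def inside_until_def)
  qed
  then have "0 < emeasure M {\<omega>\<in>space M. f \<omega> \<noteq> 0}"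
    using pos emeasure_mono[of "inside_until z r" "{\<omega>\<in>space M. f \<omega> \<noteq> 0}" M]
    by (simp add: order_less_le_trans)
  then have "(\<integral>\<^sup>+\<omega>. f \<omega> \<partial>M) \<noteq> 0" by (simp add: nn_integral_0_iff)
  then show ?thesis
    using markov(1) inside_until_eq_survival_event[OF x0] by (simp add: f_def zero_less_iff_neq_zero)
qed

end

lemma (in brownian_motion) emeasure_inside_until_pos:
  assumes minorized: "cond_law_minorized M t c \<nu>" and c: "0 < c" and \<nu>: "0 < measure \<nu> UNIV"
    and z: "0 < z" and t: "0 < t" and x0: "\<bar>x0\<bar> < z" and u: "0 \<le> u"
  shows "0 < emeasure M (inside_until z u)"
proof -
  define S where "S = z\<^sup>2 * t"
  have S_pos: "0 < S" using z t by (simp add: S_def)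
  have multiple: "0 < emeasure M (inside_until z (real k * S))" for k :: nat
  proof (induction k)
    case 0
    have "inside_until z 0 = space M" using x0 by (auto simp: inside_until_def W_0)
    then show ?case by (simp add: emeasure_space_1)
  next
    case (Suc k)
    interpret brownian_motion_split M W x0 "real k * S" S
      using S_pos by unfold_locales simp_all
    from emeasure_inside_until_extend[OF minorized c \<nu> z S_def x0 Suc]
    show ?case by (simp add: algebra_simps)
  qed
  obtain k :: nat where "u \<le> real k * S"
    using real_arch_simple[of "u / S"] S_pos by (auto simp: divide_le_eq)
  then have "inside_until z (real k * S) \<subseteq> inside_until z u" by (auto simp: inside_until_def)
  with multiple[of k] sets_inside_until[OF u] show ?thesis
    by (metis emeasure_mono order_less_le_trans)
qed

context brownian_motion_split
begin

lemma cond_law_lower_bound: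
  assumes minorized: "cond_law_minorized M t c \<nu>" and c: "0 < c" and \<nu>: "0 < measure \<nu> UNIV"
    and z: "0 < z" and S: "S = z\<^sup>2 * t" and x0: "\<bar>x0\<bar> < z" and A: "A \<in> sets borel"
  shows "c * measure \<nu> ((\<lambda>v. z * v) -` A) \<le> cond_law M W z (r + S) A"
proof -
  define a where "a = c * measure \<nu> ((\<lambda>v. z * v) -` A)"
  define E where "E B = {\<omega>\<in>space M. W (r + S) \<omega> \<in> B \<and> exit_time z W \<omega> > ereal (r + S)}" for B
  note markov_U = emeasure_survival_eq_nn_integral[OF x0 space_in_borel]
  have "ennreal a * emeasure M (E UNIV) =
      (\<integral>\<^sup>+\<omega>. ennreal a * (indicator (inside_until z r) \<omega> * survival_from z UNIV (W r \<omega>)) \<partial>M)"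
    unfolding E_def markov_U(1) by (rule nn_integral_cmult[OF markov_U(2), symmetric])
  also have "\<dots> \<le> emeasure M (E A)"
    unfolding E_def emeasure_survival_eq_nn_integral(1)[OF x0 A]
  proof (rule nn_integral_mono)
    fix \<omega> assume "\<omega> \<in> space M"
    show "ennreal a * (indicator (inside_until z r) \<omega> * survival_from z UNIV (W r \<omega>)) \<le>
        indicator (inside_until z r) \<omega> * survival_from z A (W r \<omega>)"
    proof (cases "\<omega> \<in> inside_until z r")
      case True
      then have "\<bar>W r \<omega>\<bar> < z" using r_nonneg by (auto simp: inside_until_def)
      from survival_from_minorized(2)[OF minorized c \<nu> z S this A] True show ?thesis
        by (simp add: a_def)
    qed simp
  qed
  finally have "a * measure M (E UNIV) \<le> measure M (E A)"
    using c by (simp add: emeasure_eq_measure a_def ennreal_mult'[symmetric])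
  moreover have "0 < measure M (E UNIV)"
    using emeasure_inside_until_pos[OF minorized c \<nu> z _ x0, of "r + S"] S_pos z r_nonneg
      inside_until_eq_survival_event[OF x0]
    by (simp add: E_def emeasure_eq_measure S zero_less_mult_iff)
  moreover have "cond_law M W z (r + S) A = measure M (E A) / measure M (E UNIV)"
    by (simp add: cond_law_def E_def)
  ultimately show ?thesis
    unfolding a_def[symmetric] by (simp add: pos_le_divide_eq)
qed

end

theorem lemma2:
  fixes h_min h_max t0 c :: real and \<nu> :: "real measure"
  assumes "0 < h_min" "h_min \<le> h_max" "0 < t0" "0 < c"
    and "prob_space \<nu>" "sets \<nu> = sets borel" "emeasure \<nu> (UNIV - {-1<..<1}) = 0"
    and "\<forall>(M :: 'a measure) W x. brownian_motion_from M W x \<and> x \<in> {-1<..<1} \<longrightarrow>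
           (\<forall>A\<in>sets borel. cond_law M W 1 (min (t0 / h_max\<^sup>2) t0) A \<ge> c * measure \<nu> A)"
  shows "\<forall>z\<in>{h_min..h_max}. \<forall>(M :: 'a measure) W x u.
           brownian_motion_from M W x \<and> x \<in> {-z<..<z} \<and> u \<ge> t0 \<longrightarrow>
           (\<forall>A\<in>sets borel. cond_law M W z u A \<ge> c * measure (distr \<nu> borel (\<lambda>y. z * y)) A)"
proof (intro ballI allI impI)
  fix z and M :: "'a measure" and W x u and A :: "real set"
  assume z: "z \<in> {h_min..h_max}" and W: "brownian_motion_from M W x \<and> x \<in> {-z<..<z} \<and> u \<ge> t0"
    and A: "A \<in> sets borel"
  define t where "t = min (t0 / h_max\<^sup>2) t0"
  have t_pos: "0 < t" using assms(1-3) by (simp add: t_def)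
  have "z\<^sup>2 * t \<le> h_max\<^sup>2 * (t0 / h_max\<^sup>2)"
    using z assms(1) t_pos by (intro mult_mono power_mono) (auto simp: t_def)
  with assms(1,2) W have S_le: "z\<^sup>2 * t \<le> u" by simp
  interpret brownian_motion_split M W x "u - z\<^sup>2 * t" "z\<^sup>2 * t"
    using W S_le z assms(1) t_pos by unfold_locales auto
  have minorized: "cond_law_minorized M t c \<nu>"
    using assms(8) by (auto simp: cond_law_minorized_def t_def)
  have "measure \<nu> UNIV = 1"
    using prob_space.prob_space[OF assms(5)] sets_eq_imp_space_eq[OF assms(6)] by simp
  from cond_law_lower_bound[OF minorized assms(4) _ _ refl _ A] this z assms(1) W
  have "c * measure \<nu> ((\<lambda>v. z * v) -` A) \<le> cond_law M W z u A" by auto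
  moreover have "measure (distr \<nu> borel (\<lambda>y. z * y)) A = measure \<nu> ((\<lambda>v. z * v) -` A)"
    using A sets_eq_imp_space_eq[OF assms(6)]
    by (subst measure_distr) (auto simp: measurable_cong_sets[OF assms(6) refl])
  ultimately show "c * measure (distr \<nu> borel (\<lambda>y. z * y)) A \<le> cond_law M W z u A" by simp
qed

end
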